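(* Let $(X,T)$ be a compact Hausdorff flow such that every point of $X$ is almost automorphic. Then the enveloping semigroup $\mathcal E(X,T)$ is a group, and the group inversion $g\mapsto g^{-1}$ is a continuous map from $\mathcal E(X,T)$ onto $\mathcal E(X,T)$ with respect to the product topology on $X^X$.
   Context: $X$ compact Hausdorff, $T$ a topological group acting continuously on $X$. A point $x$ is almost automorphic if for every net $\{t_i\}\subset T$ with $t_ix\to y$ it holds that $t_i^{-1}y\to x$. The enveloping semigroup $\mathcal E(X,T)$ is the closure of $T$ in $X^X$ with the product topology, with composition as operation. *)

theory Defs
  imports "HOL-Analysis.Analysis" "HOL-Algebra.Group"
begin

text \<open>A continuous action of a topological group (written additively, group_add is
  not necessarily commutative) on a topological space.\<close>
definition continuous_group_action :: "('g::topological_group_add \<Rightarrow> 'x::topological_space \<Rightarrow> 'x) \<Rightarrow> bool" where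
  "continuous_group_action act \<longleftrightarrow>
     act 0 = id \<and> (\<forall>g h x. act (g + h) x = act g (act h x)) \<and>
     continuous_on UNIV (\<lambda>(g, x). act g x)"

text \<open>Almost automorphic point. Nets are represented by filters: a net (t_i) in T
  corresponds to the image filter on T, and convergence of t_i x and of t_i^{-1} y
  is convergence along that filter.\<close>
definition almost_automorphic :: "('g::group_add \<Rightarrow> 'x::topological_space \<Rightarrow> 'x) \<Rightarrow> 'x \<Rightarrow> bool" where
  "almost_automorphic act x \<longleftrightarrow>
     (\<forall>(F::'g filter) y. ((\<lambda>t. act t x) \<longlongrightarrow> y) F \<longrightarrow> ((\<lambda>t. act (- t) y) \<longlongrightarrow> x) F)"

definition enveloping_semigroup :: "('g \<Rightarrow> 'x::topological_space \<Rightarrow> 'x) \<Rightarrow> ('x \<Rightarrow> 'x) set" where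
  "enveloping_semigroup act = closure (range act)"

definition enveloping_monoid :: "('g \<Rightarrow> 'x::topological_space \<Rightarrow> 'x) \<Rightarrow> ('x \<Rightarrow> 'x) monoid" where
  "enveloping_monoid act = \<lparr>carrier = enveloping_semigroup act, mult = (\<circ>), one = id\<rparr>"

end

theory Submission
  imports Defs
begin

(* The key object is the inversion hull K, the closure in X^X x X^X of the pairs
   (act t, act (-t)).  K is compact, and its two projections are both E.  If (f,g) is in K,
   some proper filter (a net of group elements) makes act t converge to f and act (-t) to g
   pointwise; almost automorphy, applied along this filter and along its reflection, gives
   g o f = id and f o g = id.  Hence every f in E has a two-sided inverse in E, so E is a group,
   and K is exactly the graph of inversion on E.  A map whose graph is compact and whose
   domain is Hausdorff is continuous, which yields continuity of inversion. *)

lemma Hausdorff_space_euclidean_t2: "Hausdorff_space (euclidean :: 'a::t2_space topology)"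
  unfolding Hausdorff_space_def by (metis disjnt_def open_openin separation_t2)

lemma Hausdorff_space_euclidean_fun:
  "Hausdorff_space (euclidean :: ('a \<Rightarrow> 'b::t2_space) topology)"
  by (metis Hausdorff_space_product_topology Hausdorff_space_euclidean_t2 euclidean_product_topology)

(* Compact sets are closed in a Hausdorff topology; used for function spaces, which carry no
   t2_space instance. *)
lemma compact_imp_closed_Hausdorff:
  assumes "Hausdorff_space (euclidean :: 'a::topological_space topology)" and "compact (S :: 'a set)"
  shows "closed S"
  using compactin_imp_closedin[OF assms(1)] assms(2)
  by (metis closed_closedin compactin_euclidean_iff)

lemma compact_UNIV_fun:
  assumes "compact (UNIV :: 'b::topological_space set)"
  shows "compact (UNIV :: ('a \<Rightarrow> 'b) set)"
proof -
  have "compact_space (euclidean :: 'b topology)"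
    using assms by (simp add: compact_space_def)
  then have "compact_space (product_topology (\<lambda>i::'a. euclidean :: 'b topology) UNIV)"
    by (simp add: compact_space_product_topology)
  then show ?thesis
    by (simp add: euclidean_product_topology compact_space_def)
qed

lemma tendsto_fun_iff:
  fixes f :: "'c \<Rightarrow> 'a \<Rightarrow> 'b::topological_space"
  shows "(f \<longlongrightarrow> l) F \<longleftrightarrow> (\<forall>i. ((\<lambda>x. f x i) \<longlongrightarrow> l i) F)"
proof -
  have "(f \<longlongrightarrow> l) F \<longleftrightarrow> limitin (product_topology (\<lambda>i. euclidean) UNIV) f l F"
    by (simp add: euclidean_product_topology)
  also have "\<dots> \<longleftrightarrow> (\<forall>i. ((\<lambda>x. f x i) \<longlongrightarrow> l i) F)"
    by (simp add: limitin_componentwise)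
  finally show ?thesis .
qed

lemma continuous_on_comp_left:
  fixes f :: "'b::topological_space \<Rightarrow> 'c::topological_space"
  assumes "continuous_on UNIV f"
  shows "continuous_on A (\<lambda>h :: 'a \<Rightarrow> 'b. f \<circ> h)"
  unfolding o_def
  by (intro continuous_on_coordinatewise_then_product continuous_on_compose2[OF assms]
      continuous_on_subset[OF continuous_on_product_coordinates]) auto

lemma continuous_on_comp_right:
  "continuous_on A (\<lambda>f :: 'b \<Rightarrow> 'c::topological_space. f \<circ> h)"
  unfolding o_def
  by (intro continuous_on_coordinatewise_then_product
      continuous_on_subset[OF continuous_on_product_coordinates]) auto

(* The closure of a composition-closed set of continuous self-maps is composition-closed:
   first approximate the right factor, then the left one. *)
lemma closure_comp_closed:
  fixes S :: "('a::topological_space \<Rightarrow> 'a) set"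
  assumes cont: "\<And>f. f \<in> S \<Longrightarrow> continuous_on UNIV f"
    and comp: "\<And>f h. f \<in> S \<Longrightarrow> h \<in> S \<Longrightarrow> f \<circ> h \<in> S"
    and f: "f \<in> closure S" and h: "h \<in> closure S"
  shows "f \<circ> h \<in> closure S"
proof -
  have left: "f \<circ> h \<in> closure S" if "f \<in> S" for f
  proof -
    have "(\<lambda>h. f \<circ> h) ` closure S \<subseteq> closure S"
      by (rule image_closure_subset[OF continuous_on_comp_left[OF cont[OF that]]])
        (use comp that closure_subset in auto)
    then show ?thesis using h by blast
  qed
  have "(\<lambda>f. f \<circ> h) ` closure S \<subseteq> closure S"
    by (rule image_closure_subset[OF continuous_on_comp_right]) (use left in auto)
  then show ?thesis using f by blast
qed

lemma closure_range_limit: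
  assumes "x \<in> closure (range P)"
  shows "\<exists>F. F \<noteq> bot \<and> (P \<longlongrightarrow> x) F"
proof (intro exI conjI)
  show "filtercomap P (nhds x) \<noteq> bot"
  proof (rule filtercomap_neq_bot)
    fix Q assume "eventually Q (nhds x)"
    then obtain S where S: "open S" "x \<in> S" "\<forall>z\<in>S. Q z"
      by (auto simp: eventually_nhds)
    then have "S \<inter> range P \<noteq> {}"
      using assms by (metis open_Int_closure_eq_empty empty_iff IntI)
    then show "\<exists>t. Q (P t)" using S by auto
  qed
qed (rule filterlim_filtercomap)

lemma image_closure_compact:
  assumes "Hausdorff_space (euclidean :: 'b::topological_space topology)"
    and "compact (closure A)" and "continuous_on (closure A) (f :: 'a::topological_space \<Rightarrow> 'b)"
  shows "f ` closure A = closure (f ` A)"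
proof
  show "f ` closure A \<subseteq> closure (f ` A)"
    by (rule image_closure_subset[OF assms(3)]) (auto intro: closure_subset[THEN subsetD])
  have "closed (f ` closure A)"
    by (rule compact_imp_closed_Hausdorff[OF assms(1) compact_continuous_image[OF assms(3,2)]])
  then show "closure (f ` A) \<subseteq> f ` closure A"
    by (rule closure_minimal[rotated]) (use closure_subset in blast)
qed

(* Closed graph theorem: a map into any space whose graph is compact is continuous, provided
   its domain is Hausdorff (preimages of closed sets are projections of compact sets). *)
lemma continuous_on_compact_graph:
  fixes h :: "'a::topological_space \<Rightarrow> 'b::topological_space"
  assumes "Hausdorff_space (euclidean :: 'a topology)"
    and graph: "compact ((\<lambda>x. (x, h x)) ` S)"
  shows "continuous_on S h"
  unfolding continuous_on_closed
proof (intro allI impI)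
  fix B :: "'b set" assume "closedin (top_of_set (h ` S)) B"
  then obtain C where C: "closed C" "B = h ` S \<inter> C"
    by (auto simp: closedin_closed)
  have eq: "S \<inter> h -` B = fst ` ((\<lambda>x. (x, h x)) ` S \<inter> (UNIV \<times> C))"
    using C by force
  have "compact ((\<lambda>x. (x, h x)) ` S \<inter> (UNIV \<times> C))"
    using graph C by (simp add: compact_Int_closed closed_Times)
  then have "closed (S \<inter> h -` B)"
    unfolding eq by (intro compact_imp_closed_Hausdorff[OF assms(1)] compact_continuous_image continuous_intros)
  then show "closedin (top_of_set S) (S \<inter> h -` B)"
    by (auto simp: closedin_closed intro!: exI[of _ "S \<inter> h -` B"])
qed

lemma (in group) inv_image_carrier: "(\<lambda>x. inv x) ` carrier G = carrier G"
proof
  show "(\<lambda>x. inv x) ` carrier G \<subseteq> carrier G" by auto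
  show "carrier G \<subseteq> (\<lambda>x. inv x) ` carrier G"
  proof
    fix x assume "x \<in> carrier G"
    then show "x \<in> (\<lambda>x. inv x) ` carrier G"
      by (intro image_eqI[of _ _ "inv x"]) auto
  qed
qed

lemma almost_automorphic_limit_inverse:
  fixes act :: "'g::group_add \<Rightarrow> 'x::t2_space \<Rightarrow> 'x"
  assumes aa: "\<forall>x. almost_automorphic act x" and F: "F \<noteq> bot"
    and lim_f: "(act \<longlongrightarrow> f) F" and lim_g: "((\<lambda>t. act (- t)) \<longlongrightarrow> g) F"
  shows "g \<circ> f = id \<and> f \<circ> g = id"
proof -
  have aa_lim: "((\<lambda>t. act (- t) y) \<longlongrightarrow> x) G" if "((\<lambda>t. act t x) \<longlongrightarrow> y) G" for x y G
    using aa that by (auto simp: almost_automorphic_def)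
  have f_x: "((\<lambda>t. act t x) \<longlongrightarrow> f x) F" for x
    using lim_f tendsto_fun_iff by metis
  have g_x: "((\<lambda>t. act (- t) x) \<longlongrightarrow> g x) F" for x
    using lim_g tendsto_fun_iff[of "\<lambda>t. act (- t)"] by metis
  have left: "g (f x) = x" for x
    using tendsto_unique[OF F g_x aa_lim[OF f_x]] .
  have right: "f (g y) = y" for y
  proof -
    \<comment> \<open>Apply almost automorphy along the reflected filter, along which act t y converges to g y.\<close>
    have F': "filtermap uminus F \<noteq> bot" using F by (simp add: filtermap_bot_iff)
    have "((\<lambda>s. act s y) \<longlongrightarrow> g y) (filtermap uminus F)"
      unfolding filterlim_filtermap using g_x by (simp add: o_def)
    then have "((\<lambda>s. act (- s) (g y)) \<longlongrightarrow> y) (filtermap uminus F)" by (rule aa_lim)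
    then have "((\<lambda>t. act t (g y)) \<longlongrightarrow> y) F"
      unfolding filterlim_filtermap by simp
    then show ?thesis using tendsto_unique[OF F f_x] by metis
  qed
  show ?thesis using left right by (auto simp: fun_eq_iff)
qed

definition inversion_hull :: "('g::group_add \<Rightarrow> 'x::topological_space \<Rightarrow> 'x) \<Rightarrow> (('x \<Rightarrow> 'x) \<times> ('x \<Rightarrow> 'x)) set" where
  "inversion_hull act = closure (range (\<lambda>t. (act t, act (- t))))"

locale almost_automorphic_flow =
  fixes act :: "'g::topological_group_add \<Rightarrow> 'x::t2_space \<Rightarrow> 'x"
  assumes compact_phase_space: "compact (UNIV :: 'x set)"
    and action: "continuous_group_action act"
    and almost_automorphic: "\<forall>x. almost_automorphic act x"
begin

lemma act_add: "act s \<circ> act t = act (s + t)"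
  using action by (auto simp: continuous_group_action_def fun_eq_iff)

lemma act_continuous: "continuous_on UNIV (act t)"
proof -
  have "continuous_on UNIV ((\<lambda>(g, x). act g x) \<circ> (\<lambda>x. (t, x)))"
    using action unfolding continuous_group_action_def
    by (intro continuous_on_compose continuous_intros) (auto elim: continuous_on_subset)
  then show ?thesis by (simp add: o_def)
qed

lemma id_enveloping: "id \<in> enveloping_semigroup act"
proof -
  have "id \<in> range act"
    using action by (metis continuous_group_action_def rangeI)
  then show ?thesis
    unfolding enveloping_semigroup_def using closure_subset by blast
qed

lemma enveloping_comp:
  assumes "f \<in> enveloping_semigroup act" and "h \<in> enveloping_semigroup act"
  shows "f \<circ> h \<in> enveloping_semigroup act"
  using assms unfolding enveloping_semigroup_def
  by (rule closure_comp_closed[rotated 2]) (auto simp: act_add act_continuous)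

lemma inversion_hull_compact: "compact (inversion_hull act)"
proof -
  have "compact (UNIV :: ('x \<Rightarrow> 'x) set)"
    using compact_phase_space by (rule compact_UNIV_fun)
  then have "compact (UNIV :: (('x \<Rightarrow> 'x) \<times> ('x \<Rightarrow> 'x)) set)"
    using compact_Times by fastforce
  then show ?thesis
    unfolding inversion_hull_def by (rule compact_Int_closed[of UNIV, simplified]) simp
qed

lemma fst_inversion_hull: "fst ` inversion_hull act = enveloping_semigroup act"
  using image_closure_compact[OF Hausdorff_space_euclidean_fun, of "range (\<lambda>t. (act t, act (- t)))" fst]
    inversion_hull_compact
  by (simp add: inversion_hull_def enveloping_semigroup_def image_image continuous_on_fst)

lemma snd_inversion_hull: "snd ` inversion_hull act = enveloping_semigroup act"
proof -
  have "range (\<lambda>t. act (- t)) = range act"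
    by (metis (no_types) surj_def minus_minus range_composition[of act uminus])
  then show ?thesis
    using image_closure_compact[OF Hausdorff_space_euclidean_fun, of "range (\<lambda>t. (act t, act (- t)))" snd]
      inversion_hull_compact
    by (simp add: inversion_hull_def enveloping_semigroup_def image_image continuous_on_snd)
qed

lemma inversion_hull_inverse:
  assumes "(f, g) \<in> inversion_hull act"
  shows "g \<circ> f = id \<and> f \<circ> g = id"
proof -
  obtain F where "F \<noteq> bot" and lim: "((\<lambda>t. (act t, act (- t))) \<longlongrightarrow> (f, g)) F"
    using assms closure_range_limit unfolding inversion_hull_def by blast
  then show ?thesis
    using almost_automorphic_limit_inverse[OF almost_automorphic]
      tendsto_fst[OF lim] tendsto_snd[OF lim] by simp
qed

(* Every element of E has a left inverse in E: take the partner in the inversion hull. *)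
lemma enveloping_group: "group (enveloping_monoid act)"
proof (rule groupI)
  fix f assume "f \<in> carrier (enveloping_monoid act)"
  then obtain g where fg: "(f, g) \<in> inversion_hull act"
    using fst_inversion_hull by (force simp: enveloping_monoid_def)
  then have "g \<in> enveloping_semigroup act"
    using snd_inversion_hull by force
  then show "\<exists>g\<in>carrier (enveloping_monoid act). g \<otimes>\<^bsub>enveloping_monoid act\<^esub> f = \<one>\<^bsub>enveloping_monoid act\<^esub>"
    using inversion_hull_inverse[OF fg] by (auto simp: enveloping_monoid_def)
qed (auto simp: enveloping_monoid_def enveloping_comp id_enveloping o_assoc)

lemma inversion_hull_graph:
  "inversion_hull act = (\<lambda>f. (f, inv\<^bsub>enveloping_monoid act\<^esub> f)) ` enveloping_semigroup act"
proof -
  have pair_inv: "f \<in> enveloping_semigroup act \<and> g = inv\<^bsub>enveloping_monoid act\<^esub> f"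
    if fg: "(f, g) \<in> inversion_hull act" for f g
  proof -
    have "f \<in> enveloping_semigroup act" "g \<in> enveloping_semigroup act"
      using fg fst_inversion_hull snd_inversion_hull by force+
    moreover have "g \<otimes>\<^bsub>enveloping_monoid act\<^esub> f = \<one>\<^bsub>enveloping_monoid act\<^esub>"
      using inversion_hull_inverse[OF fg] by (simp add: enveloping_monoid_def)
    ultimately show ?thesis
      using group.inv_equality[OF enveloping_group] by (force simp: enveloping_monoid_def)
  qed
  show ?thesis
  proof
    show "inversion_hull act \<subseteq> (\<lambda>f. (f, inv\<^bsub>enveloping_monoid act\<^esub> f)) ` enveloping_semigroup act"
      using pair_inv by force
    show "(\<lambda>f. (f, inv\<^bsub>enveloping_monoid act\<^esub> f)) ` enveloping_semigroup act \<subseteq> inversion_hull act"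
    proof clarify
      fix f assume "f \<in> enveloping_semigroup act"
      then obtain g where "(f, g) \<in> inversion_hull act"
        using fst_inversion_hull by force
      then show "(f, inv\<^bsub>enveloping_monoid act\<^esub> f) \<in> inversion_hull act"
        using pair_inv by force
    qed
  qed
qed

(* Inversion on E is continuous, because its graph (the inversion hull) is compact. *)
lemma continuous_inv:
  "continuous_on (enveloping_semigroup act) (\<lambda>f. inv\<^bsub>enveloping_monoid act\<^esub> f)"
  using continuous_on_compact_graph[OF Hausdorff_space_euclidean_fun] inversion_hull_compact
  by (simp add: inversion_hull_graph)

lemma inv_image_enveloping:
  "(\<lambda>f. inv\<^bsub>enveloping_monoid act\<^esub> f) ` enveloping_semigroup act = enveloping_semigroup act"
  using group.inv_image_carrier[OF enveloping_group] by (simp add: enveloping_monoid_def)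

end

theorem mainTheorem3:
  fixes act :: "'g::topological_group_add \<Rightarrow> 'x::t2_space \<Rightarrow> 'x"
  assumes "compact (UNIV :: 'x set)"
    and "continuous_group_action act"
    and "\<forall>x. almost_automorphic act x"
  shows "group (enveloping_monoid act)
    \<and> continuous_on (enveloping_semigroup act) (\<lambda>f. inv\<^bsub>enveloping_monoid act\<^esub> f)
    \<and> (\<lambda>f. inv\<^bsub>enveloping_monoid act\<^esub> f) ` enveloping_semigroup act = enveloping_semigroup act"
proof -
  interpret almost_automorphic_flow act
    using assms by unfold_locales
  show ?thesis
    using enveloping_group continuous_inv inv_image_enveloping by blast
qed

end
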